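(* Let $d\ge 1$ and $q\ge 1$ be integers, let $\mathbf{g}_0\in\mathbb{R}^d$ (the server's gradient at iteration $t$, computed on the clean root dataset), and let $\nabla F(\mathbf{w}^t)\in\mathbb{R}^d$ be the gradient of the expected risk at the current model $\mathbf{w}^t$. Let $\bar{\mathbf{g}}_1,\dots,\bar{\mathbf{g}}_N\in\mathbb{R}^d$ be the vectors submitted by the $N$ clients, where any number of them may be adversarial (arbitrary), subject only to $\|\bar{\mathbf{g}}_i\|\le\|\mathbf{g}_0\|$ for every $i$. Let $\eta_1,\dots,\eta_N\ge 0$ be aggregation weights with $\sum_{i=1}^N\eta_i=1$, and let $\bar{\mathbf{g}}^t=\sum_{i=1}^N\eta_i\bar{\mathbf{g}}_i$. Then $$\|\bar{\mathbf{g}}^t-\nabla F(\mathbf{w}^t)\|\le 3\|\mathbf{g}_0-\nabla F(\mathbf{w}^t)\|+2\|\nabla F(\mathbf{w}^t)\|+\frac{\sqrt{d}}{q}.$$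
   Context: All norms are Euclidean. In the underlying federated learning protocol, honest client $i$ with local gradient $\mathbf{g}_i$ submits $\bar{\mathbf{g}}_i=Q\!\left(\frac{\|\mathbf{g}_0\|}{\|\mathbf{g}_i\|}\mathbf{g}_i\right)$, where $Q$ is applied coordinatewise with $Q(x)=\lfloor qx\rfloor/q$ for $x\ge0$ and $Q(x)=(\lfloor qx\rfloor+1)/q$ for $x<0$; the server verifies $\|\bar{\mathbf{g}}_i\|\le\|\mathbf{g}_0\|$ for all clients, so adversarial clients may submit any vector satisfying this bound. The weights are $\eta_i=TS_i/\sum_j TS_j$ with trust scores $TS_i=\max\bigl(0,\langle\bar{\mathbf{g}}_i,\mathbf{g}_0\rangle/\|\mathbf{g}_0\|^2\bigr)$ (assumed not all zero), hence nonnegative and summing to one. *)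

theory Defs
  imports "HOL-Analysis.Analysis"
begin

end

theory Submission
  imports Defs
begin

text \<open>The aggregate is a convex combination of vectors in the closed ball of radius
  \<open>\<parallel>g\<^sub>0\<parallel>\<close>, so it lies in that ball.\<close>

lemma norm_convex_combination_le:
  fixes v :: "'i \<Rightarrow> 'a::real_normed_vector"
  assumes "\<And>i. i \<in> I \<Longrightarrow> 0 \<le> w i"
    and "\<And>i. i \<in> I \<Longrightarrow> norm (v i) \<le> r"
    and "sum w I = 1"
  shows "norm (\<Sum>i\<in>I. w i *\<^sub>R v i) \<le> r"
proof -
  have "norm (\<Sum>i\<in>I. w i *\<^sub>R v i) \<le> (\<Sum>i\<in>I. norm (w i *\<^sub>R v i))"
    by (rule norm_sum)
  also have "\<dots> \<le> (\<Sum>i\<in>I. w i * r)"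
    by (rule sum_mono) (simp add: assms(1,2) mult_left_mono)
  also have "\<dots> = r"
    using assms(3) by (simp add: sum_distrib_right[symmetric])
  finally show ?thesis .
qed

lemma norm_diff_le_of_norm_le:
  fixes x y z :: "'a::real_normed_vector"
  assumes "norm x \<le> norm z"
  shows "norm (x - y) \<le> norm (z - y) + 2 * norm y"
proof -
  have "norm (x - y) \<le> norm z + norm y"
    using norm_triangle_ineq4[of x y] assms by linarith
  moreover have "norm z \<le> norm (z - y) + norm y"
    using norm_triangle_ineq[of "z - y" y] by simp
  ultimately show ?thesis by linarith
qed

theorem mainTheorem1:
  fixes g0 gradF :: "real ^ 'd"
    and gbar :: "nat \<Rightarrow> real ^ 'd"
    and eta :: "nat \<Rightarrow> real"
    and N q :: nat
  assumes q_pos: "q \<ge> 1"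
    and bound: "\<And>i. i \<in> {1..N} \<Longrightarrow> norm (gbar i) \<le> norm g0"
    and eta_nonneg: "\<And>i. i \<in> {1..N} \<Longrightarrow> eta i \<ge> 0"
    and eta_sum: "(\<Sum>i=1..N. eta i) = 1"
  shows "norm ((\<Sum>i=1..N. eta i *\<^sub>R gbar i) - gradF)
         \<le> 3 * norm (g0 - gradF) + 2 * norm gradF + sqrt (real CARD('d)) / real q"
proof -
  have "norm (\<Sum>i=1..N. eta i *\<^sub>R gbar i) \<le> norm g0"
    using eta_nonneg bound eta_sum by (rule norm_convex_combination_le)
  then have "norm ((\<Sum>i=1..N. eta i *\<^sub>R gbar i) - gradF) \<le> norm (g0 - gradF) + 2 * norm gradF"
    by (rule norm_diff_le_of_norm_le)
  moreover have "0 \<le> sqrt (real CARD('d)) / real q"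
    by simp
  ultimately show ?thesis
    using norm_ge_zero[of "g0 - gradF"] by linarith
qed

end
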